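(* Let $\lambda_\pm:V_0\to(0,\infty)$, $\rho_B=\frac{\lambda_+}{\lambda_++\lambda_-}$, $\rho_*=\min_{V_0}\rho_B$, $\rho^*=\max_{V_0}\rho_B$, and let $\varrho:K\to\mathbb R$ satisfy $\varrho\in\mathcal F$, $\varrho|_{V_0}=\rho_B$, $\min_K\varrho=\rho_*$, $\max_K\varrho=\rho^*$. Then there is a constant $C>0$ depending only on $\rho_B$ and $\|c\|_\infty$ such that for every $N\ge1$ and every $\psi:\Omega_N\to\mathbb R$ with $\psi^2$ a density with respect to $\nu_\varrho$, \[ \big\langle\psi,-5^{-N}\mathcal L_N^G\psi\big\rangle_{\nu_\varrho}\ge -C\Big(\frac35\Big)^N. \]
   Context: Sierpiński gasket: $a_0=(\tfrac12,\tfrac{\sqrt3}2)$, $a_1=(0,0)$, $a_2=(1,0)$, $V_0=\{a_0,a_1,a_2\}$, $\varphi_i(x)=(x+a_i)/2$, $K$ the unique nonempty compact set with $K=\bigcup_i\varphi_i(K)$; for words $w$ over $\{0,1,2\}$, $\varphi_w$ is the composition of the $\varphi_{w_i}$. $V_N=\bigcup_{|w|=N}\varphi_w(V_0)$, $x\sim y$ ($x\ne y$) iff $x,y\in\varphi_w(V_0)$ for some $|w|=N$; $V_N^0=V_N\setminus V_0$; $L(x,y)$ graph distance on $V_N$. $\mathcal E_N(f)=\frac12(\frac53)^N\sum_{x\in V_N}\sum_{y\sim x}(f(y)-f(x))^2$, $\mathcal E=\lim_N\mathcal E_N$, $\mathcal F=\{f:K\to\mathbb R:\mathcal E(f)<\infty\}\subset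 C(K)$. $\Omega_N=\{0,1\}^{V_N}$; $\eta^x$ is $\eta$ with the value at $x$ flipped. $\nu_\varrho$ is the product measure on $\Omega_N$ with $\nu_\varrho(\eta(x)=1)=\varrho(x)$; $\langle\cdot,\cdot\rangle_{\nu_\varrho}$ its $L^2$ inner product; a nonnegative $f$ is a density w.r.t. $\nu_\varrho$ if $E_{\nu_\varrho}[f]=1$. $\mathcal L_N^G\varphi(\eta)=\sum_{x\in V_N^0}c_x(\eta)[\varphi(\eta^x)-\varphi(\eta)]$, where the rates satisfy: for a fixed integer $L_0\ge1$, with $\Lambda_x=\{y\in V_N:L(x,y)\le L_0\}$ and $\mathcal S=\{2^N(\Lambda_x-x):x\in V_N^0\}$ (independent of $N$ for large $N$), there are functions $c(\cdot;\Lambda):\{0,1\}^\Lambda\to(0,\infty)$, $\Lambda\in\mathcal S$, with $c_x(\eta)=c(\eta|_{\Lambda_x};2^N(\Lambda_x-x))$ for all large $N$; $\|c\|_\infty:=\max_{\Lambda\in\mathcal S}\max_{\xi\in\{0,1\}^\Lambda}c(\xi;\Lambda)$. *)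

theory Defs
  imports "HOL-Analysis.Analysis" "HOL-Library.FuncSet"
begin

type_synonym pt = "real \<times> real"

definition a :: "nat \<Rightarrow> pt" where
  "a i = (if i = 0 then (1/2, sqrt 3 / 2) else if i = 1 then (0, 0) else (1, 0))"

definition V0 :: "pt set" where
  "V0 = {a 0, a 1, a 2}"

definition phi :: "nat \<Rightarrow> pt \<Rightarrow> pt" where
  "phi i x = (1/2) *\<^sub>R (x + a i)"

definition phiw :: "nat list \<Rightarrow> pt \<Rightarrow> pt" where
  "phiw w = foldr (\<lambda>i f. phi i \<circ> f) w id"

definition words :: "nat \<Rightarrow> nat list set" where
  "words N = {w. length w = N \<and> set w \<subseteq> {0, 1, 2}}"

definition K :: "pt set" where
  "K = (THE S. compact S \<and> S \<noteq> {} \<and> S = (\<Union>i\<in>{0,1,2::nat}. phi i ` S))"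

definition V :: "nat \<Rightarrow> pt set" where
  "V N = (\<Union>w\<in>words N. phiw w ` V0)"

definition V_int :: "nat \<Rightarrow> pt set" where
  "V_int N = V N - V0"

definition adj :: "nat \<Rightarrow> pt \<Rightarrow> pt \<Rightarrow> bool" where
  "adj N x y \<longleftrightarrow> x \<noteq> y \<and> (\<exists>w\<in>words N. x \<in> phiw w ` V0 \<and> y \<in> phiw w ` V0)"

definition gdist_le :: "nat \<Rightarrow> pt \<Rightarrow> pt \<Rightarrow> nat \<Rightarrow> bool" where
  "gdist_le N x y k \<longleftrightarrow> (\<exists>p. length p \<le> Suc k \<and> p \<noteq> [] \<and> hd p = x \<and> last p = y
      \<and> set p \<subseteq> V N \<and> (\<forall>i. Suc i < length p \<longrightarrow> adj N (p ! i) (p ! Suc i)))"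

definition energyN :: "nat \<Rightarrow> (pt \<Rightarrow> real) \<Rightarrow> real" where
  "energyN N f = (1/2) * (5/3) ^ N *
     (\<Sum>x\<in>V N. \<Sum>y\<in>{y\<in>V N. adj N x y}. (f y - f x)\<^sup>2)"

definition in_F :: "(pt \<Rightarrow> real) \<Rightarrow> bool" where
  "in_F f \<longleftrightarrow> (\<exists>L::real. (\<lambda>N. energyN N f) \<longlonglongrightarrow> L)"

definition Omega :: "nat \<Rightarrow> (pt \<Rightarrow> nat) set" where
  "Omega N = PiE (V N) (\<lambda>_. {0, 1})"

definition flip :: "(pt \<Rightarrow> nat) \<Rightarrow> pt \<Rightarrow> pt \<Rightarrow> nat" where
  "flip \<eta> x = \<eta>(x := 1 - \<eta> x)"

definition nu :: "nat \<Rightarrow> (pt \<Rightarrow> real) \<Rightarrow> (pt \<Rightarrow> nat) \<Rightarrow> real" where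
  "nu N \<rho> \<eta> = (\<Prod>x\<in>V N. if \<eta> x = 1 then \<rho> x else 1 - \<rho> x)"

definition expect :: "nat \<Rightarrow> (pt \<Rightarrow> real) \<Rightarrow> ((pt \<Rightarrow> nat) \<Rightarrow> real) \<Rightarrow> real" where
  "expect N \<rho> f = (\<Sum>\<eta>\<in>Omega N. nu N \<rho> \<eta> * f \<eta>)"

definition inner_nu :: "nat \<Rightarrow> (pt \<Rightarrow> real) \<Rightarrow> ((pt \<Rightarrow> nat) \<Rightarrow> real)
    \<Rightarrow> ((pt \<Rightarrow> nat) \<Rightarrow> real) \<Rightarrow> real" where
  "inner_nu N \<rho> f g = expect N \<rho> (\<lambda>\<eta>. f \<eta> * g \<eta>)"

definition is_density :: "nat \<Rightarrow> (pt \<Rightarrow> real) \<Rightarrow> ((pt \<Rightarrow> nat) \<Rightarrow> real) \<Rightarrow> bool" where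
  "is_density N \<rho> f \<longleftrightarrow> (\<forall>\<eta>\<in>Omega N. f \<eta> \<ge> 0) \<and> expect N \<rho> f = 1"

definition Lam :: "nat \<Rightarrow> nat \<Rightarrow> pt \<Rightarrow> pt set" where
  "Lam L0 N x = {y\<in>V N. gdist_le N x y L0}"

definition shape :: "nat \<Rightarrow> nat \<Rightarrow> pt \<Rightarrow> pt set" where
  "shape L0 N x = (\<lambda>y. (2 ^ N) *\<^sub>R (y - x)) ` Lam L0 N x"

definition local_conf :: "nat \<Rightarrow> nat \<Rightarrow> pt \<Rightarrow> (pt \<Rightarrow> nat) \<Rightarrow> pt \<Rightarrow> nat" where
  "local_conf L0 N x \<eta> = restrict (\<lambda>z. \<eta> (x + (1 / 2 ^ N) *\<^sub>R z)) (shape L0 N x)"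

text \<open>The set of all shapes (union over all N >= 1; it stabilises for large N).\<close>
definition shapes :: "nat \<Rightarrow> pt set set" where
  "shapes L0 = (\<Union>N\<in>{1..}. shape L0 N ` V_int N)"

definition rate :: "nat \<Rightarrow> (pt set \<Rightarrow> (pt \<Rightarrow> nat) \<Rightarrow> real) \<Rightarrow> nat \<Rightarrow> pt \<Rightarrow> (pt \<Rightarrow> nat) \<Rightarrow> real" where
  "rate L0 c N x \<eta> = c (shape L0 N x) (local_conf L0 N x \<eta>)"

definition cnorm :: "nat \<Rightarrow> (pt set \<Rightarrow> (pt \<Rightarrow> nat) \<Rightarrow> real) \<Rightarrow> real" where
  "cnorm L0 c = Max {c \<Lambda> \<xi> | \<Lambda> \<xi>. \<Lambda> \<in> shapes L0 \<and> \<xi> \<in> PiE \<Lambda> (\<lambda>_. {0, 1})}"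

definition gen :: "nat \<Rightarrow> (pt set \<Rightarrow> (pt \<Rightarrow> nat) \<Rightarrow> real) \<Rightarrow> nat
    \<Rightarrow> ((pt \<Rightarrow> nat) \<Rightarrow> real) \<Rightarrow> (pt \<Rightarrow> nat) \<Rightarrow> real" where
  "gen L0 c N \<phi> \<eta> = (\<Sum>x\<in>V_int N. rate L0 c N x \<eta> * (\<phi> (flip \<eta> x) - \<phi> \<eta>))"

end

theory Submission
  imports Defs
begin

(* Expanding the quadratic form site by site, the contribution of x is
   sum_eta nu(eta) c_x(eta) (psi(eta)^2 - psi(eta) psi(eta^x)) >= -(|c|/4) sum_eta nu(eta) psi(eta^x)^2.
   Flipping the spin at x is a bijection of Omega_N which changes nu by at most the factor
   1/rho_min + 1/(1 - rho_max), because on V_N, a subset of K, rho lies between rho_min > 0 and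
   rho_max < 1.  Since psi^2 is a density, each site contributes at least
   -(|c|/4)(1/rho_min + 1/(1 - rho_max)); there are at most 3^(N+1) sites, and the factor 5^(-N)
   turns the sum into a multiple of (3/5)^N. *)

section \<open>The similitudes and the vertex sets\<close>

lemma phiw_Nil [simp]: "phiw [] = id"
  by (simp add: phiw_def)

lemma phiw_Cons [simp]: "phiw (i # w) = phi i \<circ> phiw w"
  by (simp add: phiw_def)

lemma phiw_diff: "phiw w x - phiw w y = (1 / 2 ^ length w) *\<^sub>R (x - y)"
proof (induction w arbitrary: x y)
  case (Cons i w)
  have "phi i u - phi i v = (1/2) *\<^sub>R (u - v)" for u v
    by (simp add: phi_def algebra_simps)
  then show ?case
    using Cons by simp
qed simp

lemma dist_phiw: "dist (phiw w x) (phiw w y) = dist x y / 2 ^ length w"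
  by (simp add: dist_norm phiw_diff)

lemma phi_a_fixed: "phi i (a i) = a i"
  by (simp add: phi_def scaleR_2[symmetric] algebra_simps)

lemma phiw_replicate_a: "phiw (replicate n i) (a i) = a i"
  by (induction n) (auto simp: phi_a_fixed)

lemma words_eq_lists: "words N = {w. set w \<subseteq> {0, 1, 2} \<and> length w = N}"
  by (auto simp: words_def)

lemma finite_words: "finite (words N)"
  by (simp add: words_eq_lists finite_lists_length_eq)

lemma card_words: "card (words N) = 3 ^ N"
proof -
  have "card {0, 1, 2 :: nat} = 3"
    by simp
  then show ?thesis
    by (simp add: words_eq_lists card_lists_length_eq del: insert_iff)
qed

lemma words_Suc: "words (Suc N) = (\<lambda>(i, w). i # w) ` ({0, 1, 2} \<times> words N)"
proof (rule set_eqI, rule iffI)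
  fix v assume "v \<in> words (Suc N)"
  then obtain i w where "v = i # w" "i \<in> {0, 1, 2}" "w \<in> words N"
    by (cases v) (auto simp: words_def)
  then show "v \<in> (\<lambda>(i, w). i # w) ` ({0, 1, 2} \<times> words N)"
    by force
qed (auto simp: words_def)

lemma V_0: "V 0 = V0"
  by (simp add: V_def words_def)

lemma V_Suc: "V (Suc N) = (\<Union>i\<in>{0, 1, 2}. phi i ` V N)"
  unfolding V_def words_Suc by (auto simp: image_UN image_image)

lemma V_subset_V_Suc: "V N \<subseteq> V (Suc N)"
proof (induction N)
  case 0
  have "a i \<in> phi i ` V0" if "i \<in> {0, 1, 2}" for i
    using that phi_a_fixed[of i, symmetric] by (auto simp: V0_def)
  then show ?case
    by (auto simp: V_0 V_Suc V0_def)
next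
  case (Suc N)
  then show ?case
    by (subst (1 2) V_Suc) blast
qed

lemma UN_V_Suc: "(\<Union>N. V (Suc N)) = (\<Union>N. V N)"
  using V_subset_V_Suc by (auto intro: UN_I[of "Suc _"] elim!: UN_E)

lemma finite_V0 [simp]: "finite V0"
  by (simp add: V0_def)

lemma card_V0: "card V0 \<le> 3"
  unfolding V0_def by (rule order_trans[OF card_insert_le_m1]) (auto simp: card_insert_le_m1)

lemma finite_V [simp]: "finite (V N)"
  unfolding V_def using finite_words by auto

lemma card_V: "card (V N) \<le> 3 ^ Suc N"
proof -
  have "card (V N) \<le> (\<Sum>w\<in>words N. card (phiw w ` V0))"
    unfolding V_def using finite_words by (rule card_UN_le)
  also have "\<dots> \<le> (\<Sum>w\<in>words N. 3)"
    by (rule sum_mono) (meson card_V0 card_image_le finite_V0 order_trans)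
  also have "\<dots> = 3 ^ Suc N"
    by (simp add: card_words)
  finally show ?thesis .
qed

lemma norm_a: "norm (a i) \<le> 1"
proof -
  have "sqrt ((1/2)\<^sup>2 + (sqrt 3 / 2)\<^sup>2) = (1::real)"
    by (simp add: power_divide)
  then show ?thesis
    by (auto simp: a_def norm_Pair)
qed

lemma norm_phiw: "norm x \<le> 1 \<Longrightarrow> norm (phiw w x) \<le> 1"
proof (induction w)
  case (Cons i w)
  have "norm (phi i (phiw w x)) \<le> (1/2) * (norm (phiw w x) + norm (a i))"
    unfolding phi_def by (simp add: norm_triangle_ineq)
  also have "\<dots> \<le> 1"
    using Cons norm_a[of i] by simp
  finally show ?case
    by simp
qed simp

lemma V_subset_cball: "V N \<subseteq> cball 0 1"
proof
  fix x assume "x \<in> V N"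
  then obtain w v where "v \<in> V0" "x = phiw w v"
    by (auto simp: V_def)
  moreover have "norm v \<le> 1"
    using \<open>v \<in> V0\<close> norm_a by (auto simp: V0_def)
  ultimately show "x \<in> cball 0 1"
    using norm_phiw by simp
qed

lemma bounded_UN_V: "bounded (\<Union>N. V N)"
  using V_subset_cball by (meson UN_least bounded_cball bounded_subset)

section \<open>The gasket as closure of the vertex sets\<close>

definition self_similar :: "pt set \<Rightarrow> bool" where
  "self_similar S \<longleftrightarrow> S = (\<Union>i\<in>{0, 1, 2}. phi i ` S)"

lemma self_similar_phiw:
  assumes "self_similar S" and "set w \<subseteq> {0, 1, 2}" and "x \<in> S"
  shows "phiw w x \<in> S"
  using assms(2)
proof (induction w)
  case (Cons i w)
  then have "phi i (phiw w x) \<in> (\<Union>i\<in>{0, 1, 2}. phi i ` S)"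
    by auto
  then show ?case
    using assms(1) unfolding self_similar_def by (metis comp_apply phiw_Cons)
qed (simp add: assms(3))

lemma self_similar_decompose:
  assumes "self_similar S" and "s \<in> S"
  shows "\<exists>w\<in>words N. \<exists>t\<in>S. s = phiw w t"
  using assms(2)
proof (induction N arbitrary: s)
  case 0
  have "[] \<in> words 0"
    by (simp add: words_def)
  then show ?case
    using 0 by force
next
  case (Suc N)
  then obtain i s' where "i \<in> {0, 1, 2}" "s' \<in> S" "s = phi i s'"
    using assms(1) unfolding self_similar_def by blast
  moreover obtain w t where "w \<in> words N" "t \<in> S" "s' = phiw w t"
    using Suc.IH \<open>s' \<in> S\<close> by blast
  ultimately have "i # w \<in> words (Suc N)" "s = phiw (i # w) t"
    by (auto simp: words_def)
  then show ?case
    using \<open>t \<in> S\<close> by blast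
qed

lemma a_in_self_similar:
  assumes "closed S" and "S \<noteq> {}" and "self_similar S" and "i \<in> {0, 1, 2}"
  shows "a i \<in> S"
proof -
  obtain s where s: "s \<in> S"
    using assms(2) by auto
  have "a i \<in> closure S"
    unfolding closure_approachable
  proof (intro allI impI)
    fix e :: real assume "e > 0"
    obtain n where n: "dist s (a i) / e < 2 ^ n"
      using real_arch_pow[of 2 "dist s (a i) / e"] by auto
    have "phiw (replicate n i) s \<in> S"
      using assms(4) by (intro self_similar_phiw[OF assms(3) _ s]) auto
    moreover have "dist (phiw (replicate n i) s) (a i) = dist s (a i) / 2 ^ n"
      using dist_phiw[of "replicate n i" s "a i"] by (simp add: phiw_replicate_a)
    moreover have "dist s (a i) / 2 ^ n < e"
      using n \<open>e > 0\<close> by (simp add: divide_less_eq mult.commute)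
    ultimately show "\<exists>y\<in>S. dist y (a i) < e"
      by (intro bexI[of _ "phiw (replicate n i) s"]) simp_all
  qed
  then show ?thesis
    using assms(1) by simp
qed

lemma V_subset_self_similar:
  assumes "closed S" and "S \<noteq> {}" and "self_similar S"
  shows "V N \<subseteq> S"
proof
  fix x assume "x \<in> V N"
  then obtain w i where "w \<in> words N" "i \<in> {0, 1, 2}" "x = phiw w (a i)"
    by (auto simp: V_def V0_def)
  then show "x \<in> S"
    using self_similar_phiw[OF assms(3) _ a_in_self_similar[OF assms]] by (auto simp: words_def)
qed

lemma self_similar_subset_closure_V:
  assumes "bounded S" and "self_similar S"
  shows "S \<subseteq> closure (\<Union>N. V N)"
proof
  fix s assume s: "s \<in> S"
  obtain B where B: "\<forall>t\<in>S. dist (a 1) t \<le> B"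
    using assms(1) bounded_any_center by blast
  show "s \<in> closure (\<Union>N. V N)"
    unfolding closure_approachable
  proof (intro allI impI)
    fix e :: real assume "e > 0"
    obtain N where N: "B / e < 2 ^ N"
      using real_arch_pow[of 2 "B / e"] by auto
    obtain w t where w: "w \<in> words N" and "t \<in> S" and "s = phiw w t"
      using self_similar_decompose[OF assms(2) s] by blast
    have "phiw w (a 1) \<in> V N"
      using w by (auto simp: V_def V0_def)
    moreover have "dist (phiw w (a 1)) s = dist (a 1) t / 2 ^ N"
      using dist_phiw[of w "a 1" t] w \<open>s = phiw w t\<close> by (simp add: words_def)
    moreover have "dist (a 1) t / 2 ^ N \<le> B / 2 ^ N"
      using B \<open>t \<in> S\<close> by (simp add: divide_right_mono)
    moreover have "B / 2 ^ N < e"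
      using N \<open>e > 0\<close> by (simp add: divide_less_eq mult.commute)
    ultimately have "dist (phiw w (a 1)) s < e"
      by linarith
    then show "\<exists>y\<in>\<Union>N. V N. dist y s < e"
      using \<open>phiw w (a 1) \<in> V N\<close> by blast
  qed
qed

lemma phi_closure: "phi i ` closure A = closure (phi i ` A)" if "bounded A"
proof
  have cont: "continuous_on X (phi i)" for X
    unfolding phi_def by (intro continuous_intros)
  show "phi i ` closure A \<subseteq> closure (phi i ` A)"
    by (rule image_closure_subset[OF cont closed_closure closure_subset])
  have "closed (phi i ` closure A)"
    using that by (intro compact_imp_closed compact_continuous_image cont) (simp add: compact_closure)
  moreover have "phi i ` A \<subseteq> phi i ` closure A"
    using closure_subset by (rule image_mono)
  ultimately show "closure (phi i ` A) \<subseteq> phi i ` closure A"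
    by (rule closure_minimal[rotated])
qed

lemma self_similar_closure_V: "self_similar (closure (\<Union>N. V N))"
proof -
  have "(\<Union>i\<in>{0, 1, 2}. phi i ` closure (\<Union>N. V N))
      = closure (\<Union>i\<in>{0, 1, 2}. phi i ` (\<Union>N. V N))"
    by (simp add: phi_closure[OF bounded_UN_V] closure_Un)
  also have "(\<Union>i\<in>{0, 1, 2}. phi i ` (\<Union>N. V N)) = (\<Union>N. V (Suc N))"
    by (auto simp: V_Suc)
  finally show ?thesis
    by (simp add: self_similar_def UN_V_Suc)
qed

lemma K_eq_closure_V: "K = closure (\<Union>N. V N)"
  unfolding K_def
proof (rule the_equality)
  have "a 0 \<in> V 0"
    by (simp add: V_0 V0_def)
  then have "closure (\<Union>N. V N) \<noteq> {}"
    using closure_subset[of "\<Union>N. V N"] by blast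
  with bounded_UN_V show "compact (closure (\<Union>N. V N)) \<and> closure (\<Union>N. V N) \<noteq> {}
      \<and> closure (\<Union>N. V N) = (\<Union>i\<in>{0, 1, 2}. phi i ` closure (\<Union>N. V N))"
    using self_similar_closure_V unfolding self_similar_def by (simp only: compact_closure simp_thms)
next
  fix S assume "compact S \<and> S \<noteq> {} \<and> S = (\<Union>i\<in>{0, 1, 2}. phi i ` S)"
  then have "compact S" "S \<noteq> {}" "self_similar S"
    unfolding self_similar_def by blast+
  show "S = closure (\<Union>N. V N)"
  proof
    show "S \<subseteq> closure (\<Union>N. V N)"
      using \<open>compact S\<close> \<open>self_similar S\<close> by (simp add: compact_imp_bounded self_similar_subset_closure_V)
    have "(\<Union>N. V N) \<subseteq> S"
      using \<open>compact S\<close> \<open>S \<noteq> {}\<close> \<open>self_similar S\<close>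
      by (simp add: UN_least V_subset_self_similar compact_imp_closed)
    then show "closure (\<Union>N. V N) \<subseteq> S"
      using \<open>compact S\<close> by (simp add: closure_minimal compact_imp_closed)
  qed
qed

lemma V_subset_K: "V N \<subseteq> K"
  unfolding K_eq_closure_V by (rule subset_trans[OF _ closure_subset]) blast

section \<open>Finitely many shapes\<close>

text \<open>Rescaled by \<open>2 ^ N\<close>, every edge of the level-\<open>N\<close> graph is a difference of two points of
  \<open>V0\<close>, so all shapes lie in the finite set \<open>step_sums L0\<close>, whatever \<open>N\<close> is; hence
  \<open>cnorm\<close> is the maximum of a finite set.\<close>

definition cell_steps :: "pt set" where
  "cell_steps = (\<lambda>(p, q). q - p) ` (V0 \<times> V0)"

definition step_sums :: "nat \<Rightarrow> pt set" where
  "step_sums k = sum_list ` {xs. set xs \<subseteq> cell_steps \<and> length xs \<le> k}"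

lemma finite_step_sums: "finite (step_sums k)"
  unfolding step_sums_def cell_steps_def by (intro finite_imageI finite_lists_length_le) simp

lemma step_sums_mono: "k \<le> k' \<Longrightarrow> step_sums k \<subseteq> step_sums k'"
  unfolding step_sums_def by auto

lemma step_sums_Cons: "d \<in> cell_steps \<Longrightarrow> s \<in> step_sums k \<Longrightarrow> d + s \<in> step_sums (Suc k)"
  unfolding step_sums_def by (auto intro!: image_eqI[of _ _ "d # _"])

lemma adj_rescaled_in_cell_steps:
  assumes "adj N x y"
  shows "(2 ^ N) *\<^sub>R (y - x) \<in> cell_steps"
proof -
  obtain w p q where "w \<in> words N" "p \<in> V0" "q \<in> V0" "x = phiw w p" "y = phiw w q"
    using assms unfolding adj_def by blast
  then have "(2 ^ N) *\<^sub>R (y - x) = q - p"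
    using phiw_diff[of w q p] by (simp add: words_def)
  then show ?thesis
    using \<open>p \<in> V0\<close> \<open>q \<in> V0\<close> unfolding cell_steps_def by force
qed

lemma path_rescaled_in_step_sums:
  assumes "p \<noteq> []" and "\<forall>i. Suc i < length p \<longrightarrow> adj N (p ! i) (p ! Suc i)"
  shows "(2 ^ N) *\<^sub>R (last p - hd p) \<in> step_sums (length p - 1)"
  using assms
proof (induction p rule: induct_list012)
  case (2 x)
  have "0 \<in> step_sums 0"
    unfolding step_sums_def by (rule image_eqI[of _ _ "[]"]) auto
  then show ?case
    by simp
next
  case (3 x y q)
  have "adj N x y"
    using "3.prems"(2) by (metis length_Cons nth_Cons_0 nth_Cons_Suc zero_less_Suc Suc_less_eq)
  moreover have "\<forall>i. Suc i < length (y # q) \<longrightarrow> adj N ((y # q) ! i) ((y # q) ! Suc i)"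
    using "3.prems"(2) by (metis Suc_less_eq length_Cons nth_Cons_Suc)
  ultimately have "(2 ^ N) *\<^sub>R (last (y # q) - y) \<in> step_sums (length q)"
    and "(2 ^ N) *\<^sub>R (y - x) \<in> cell_steps"
    using "3.IH"(2) adj_rescaled_in_cell_steps by simp_all
  then have "(2 ^ N) *\<^sub>R (y - x) + (2 ^ N) *\<^sub>R (last (y # q) - y) \<in> step_sums (Suc (length q))"
    by (rule step_sums_Cons[rotated])
  then show ?case
    by (simp add: algebra_simps)
qed simp

lemma shape_subset_step_sums: "shape L0 N x \<subseteq> step_sums L0"
proof
  fix z assume "z \<in> shape L0 N x"
  then obtain p where p: "length p \<le> Suc L0" "p \<noteq> []" "hd p = x"
    "\<forall>i. Suc i < length p \<longrightarrow> adj N (p ! i) (p ! Suc i)" "z = (2 ^ N) *\<^sub>R (last p - hd p)"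
    unfolding shape_def Lam_def gdist_le_def by auto
  then have "z \<in> step_sums (length p - 1)"
    using path_rescaled_in_step_sums[OF p(2,4)] by simp
  moreover have "length p - 1 \<le> L0"
    using p(1) by simp
  ultimately show "z \<in> step_sums L0"
    using step_sums_mono by blast
qed

lemma finite_rate_values:
  "finite {c \<Lambda> \<xi> | \<Lambda> \<xi>. \<Lambda> \<in> shapes L0 \<and> \<xi> \<in> PiE \<Lambda> (\<lambda>_. {0, 1::nat})}"
proof -
  have sub: "shapes L0 \<subseteq> Pow (step_sums L0)"
    unfolding shapes_def using shape_subset_step_sums by blast
  have "finite (SIGMA \<Lambda>:shapes L0. PiE \<Lambda> (\<lambda>_. {0, 1::nat}))"
  proof (rule finite_SigmaI)
    show "finite (shapes L0)"
      using sub finite_step_sums by (meson finite_Pow_iff finite_subset)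
    show "finite (PiE \<Lambda> (\<lambda>_. {0, 1::nat}))" if "\<Lambda> \<in> shapes L0" for \<Lambda>
      using that sub finite_step_sums by (intro finite_PiE) (auto intro: finite_subset)
  qed
  moreover have "{c \<Lambda> \<xi> | \<Lambda> \<xi>. \<Lambda> \<in> shapes L0 \<and> \<xi> \<in> PiE \<Lambda> (\<lambda>_. {0, 1::nat})}
      = (\<lambda>(\<Lambda>, \<xi>). c \<Lambda> \<xi>) ` (SIGMA \<Lambda>:shapes L0. PiE \<Lambda> (\<lambda>_. {0, 1::nat}))"
    by auto
  ultimately show ?thesis
    by simp
qed

lemma local_conf_in_PiE:
  assumes "\<eta> \<in> Omega N"
  shows "local_conf L0 N x \<eta> \<in> PiE (shape L0 N x) (\<lambda>_. {0, 1})"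
  unfolding local_conf_def restrict_PiE_iff
proof
  fix z assume "z \<in> shape L0 N x"
  then obtain y where "y \<in> V N" and "z = (2 ^ N) *\<^sub>R (y - x)"
    unfolding shape_def Lam_def by blast
  then have "x + (1 / 2 ^ N) *\<^sub>R z \<in> V N"
    by simp
  then show "\<eta> (x + (1 / 2 ^ N) *\<^sub>R z) \<in> {0, 1}"
    using assms unfolding Omega_def by (auto simp: PiE_iff)
qed

lemma rate_bounds:
  assumes "N \<ge> 1" and "x \<in> V_int N" and "\<eta> \<in> Omega N"
    and pos: "\<forall>\<Lambda>\<in>shapes L0. \<forall>\<xi>\<in>PiE \<Lambda> (\<lambda>_. {0, 1}). c \<Lambda> \<xi> > 0"
  shows "0 < rate L0 c N x \<eta>" and "rate L0 c N x \<eta> \<le> cnorm L0 c"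
proof -
  have shape: "shape L0 N x \<in> shapes L0"
    unfolding shapes_def using assms(1,2) by auto
  have conf: "local_conf L0 N x \<eta> \<in> PiE (shape L0 N x) (\<lambda>_. {0, 1})"
    using assms(3) by (rule local_conf_in_PiE)
  show "0 < rate L0 c N x \<eta>"
    unfolding rate_def using pos shape conf by blast
  have "rate L0 c N x \<eta> \<in> {c \<Lambda> \<xi> | \<Lambda> \<xi>. \<Lambda> \<in> shapes L0 \<and> \<xi> \<in> PiE \<Lambda> (\<lambda>_. {0, 1})}"
    unfolding rate_def using shape conf by blast
  then show "rate L0 c N x \<eta> \<le> cnorm L0 c"
    unfolding cnorm_def by (rule Max_ge[OF finite_rate_values])
qed

section \<open>The lower bound for the quadratic form\<close>

lemma Omega_nonempty: "Omega N \<noteq> {}"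
  by (simp add: Omega_def PiE_eq_empty_iff)

lemma flip_in_Omega: "x \<in> V N \<Longrightarrow> \<eta> \<in> Omega N \<Longrightarrow> flip \<eta> x \<in> Omega N"
  unfolding Omega_def flip_def by (auto simp: PiE_iff extensional_def)

lemma flip_flip: "x \<in> V N \<Longrightarrow> \<eta> \<in> Omega N \<Longrightarrow> flip (flip \<eta> x) x = \<eta>"
  unfolding Omega_def flip_def by (auto simp: PiE_iff fun_eq_iff)

lemma sum_Omega_flip:
  assumes "x \<in> V N"
  shows "(\<Sum>\<eta>\<in>Omega N. f (flip \<eta> x)) = (\<Sum>\<eta>\<in>Omega N. f \<eta>)"
proof (rule sum.reindex_bij_betw)
  show "bij_betw (\<lambda>\<eta>. flip \<eta> x) (Omega N) (Omega N)"
    using assms by (intro bij_betwI[where g = "\<lambda>\<eta>. flip \<eta> x"]) (auto simp: flip_in_Omega flip_flip)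
qed

lemma nu_nonneg: "\<forall>y\<in>V N. 0 \<le> \<rho> y \<and> \<rho> y \<le> 1 \<Longrightarrow> 0 \<le> nu N \<rho> \<eta>"
  unfolding nu_def by (intro prod_nonneg) auto

lemma flip_weight_ratio:
  fixes t lo hi :: real
  assumes "0 < lo" and "hi < 1" and "lo \<le> t" and "t \<le> hi"
  shows "t \<le> (1/lo + 1/(1 - hi)) * (1 - t)" and "1 - t \<le> (1/lo + 1/(1 - hi)) * t"
proof -
  have "1 \<le> (1 - t) / (1 - hi)" and "1 \<le> t / lo"
    using assms by (simp_all add: le_divide_eq)
  moreover have "0 \<le> (1 - t) / lo" and "0 \<le> t / (1 - hi)"
    using assms by simp_all
  moreover have "(1/lo + 1/(1 - hi)) * (1 - t) = (1 - t) / lo + (1 - t) / (1 - hi)"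
    and "(1/lo + 1/(1 - hi)) * t = t / lo + t / (1 - hi)"
    by (simp_all add: distrib_right)
  ultimately show "t \<le> (1/lo + 1/(1 - hi)) * (1 - t)" and "1 - t \<le> (1/lo + 1/(1 - hi)) * t"
    using assms by linarith+
qed

lemma nu_le_nu_flip:
  assumes \<rho>: "\<forall>y\<in>V N. lo \<le> \<rho> y \<and> \<rho> y \<le> hi" and "0 < lo" and "hi < 1"
    and x: "x \<in> V N" and "\<eta> \<in> Omega N"
  shows "nu N \<rho> \<eta> \<le> (1/lo + 1/(1 - hi)) * nu N \<rho> (flip \<eta> x)"
proof -
  let ?f = "\<lambda>\<eta> y. if \<eta> y = 1 then \<rho> y else 1 - \<rho> y"
  let ?P = "\<Prod>y\<in>V N - {x}. ?f \<eta> y"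
  have "(\<Prod>y\<in>V N - {x}. ?f (flip \<eta> x) y) = ?P"
    by (rule prod.cong) (auto simp: flip_def)
  then have nu_split: "nu N \<rho> \<eta> = ?f \<eta> x * ?P" "nu N \<rho> (flip \<eta> x) = ?f (flip \<eta> x) x * ?P"
    unfolding nu_def using x by (simp_all add: prod.remove)
  have "0 \<le> ?P"
    using \<rho> \<open>0 < lo\<close> \<open>hi < 1\<close> by (intro prod_nonneg) auto
  have "\<eta> x = 0 \<or> \<eta> x = 1"
    using \<open>\<eta> \<in> Omega N\<close> x unfolding Omega_def by (auto simp: PiE_iff)
  then have "?f \<eta> x \<le> (1/lo + 1/(1 - hi)) * ?f (flip \<eta> x) x"
    using flip_weight_ratio[OF \<open>0 < lo\<close> \<open>hi < 1\<close>] \<rho> x by (auto simp: flip_def)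
  then show ?thesis
    unfolding nu_split mult.assoc[symmetric] using \<open>0 \<le> ?P\<close> by (rule mult_right_mono)
qed

lemma quadratic_lower_bound:
  fixes r M p q :: real
  assumes "0 \<le> r" and "r \<le> M"
  shows "- (M / 4) * q\<^sup>2 \<le> r * (p\<^sup>2 - p * q)"
proof -
  have "- (r / 4) * q\<^sup>2 \<le> r * (p\<^sup>2 - p * q)"
    using mult_nonneg_nonneg[OF assms(1) zero_le_power2[of "p - q / 2"]]
    by (simp add: power2_eq_square algebra_simps)
  moreover have "- (M / 4) * q\<^sup>2 \<le> - (r / 4) * q\<^sup>2"
    using assms(2) by (simp add: mult_right_mono)
  ultimately show ?thesis
    by linarith
qed

lemma site_form_lower_bound:
  assumes \<rho>: "\<forall>y\<in>V N. lo \<le> \<rho> y \<and> \<rho> y \<le> hi" and "0 < lo" and "hi < 1"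
    and x: "x \<in> V N" and r: "\<forall>\<eta>\<in>Omega N. 0 \<le> r \<eta> \<and> r \<eta> \<le> M"
    and norm: "expect N \<rho> (\<lambda>\<eta>. (\<psi> \<eta>)\<^sup>2) = 1"
  shows "- (M / 4) * (1/lo + 1/(1 - hi))
      \<le> (\<Sum>\<eta>\<in>Omega N. nu N \<rho> \<eta> * (r \<eta> * ((\<psi> \<eta>)\<^sup>2 - \<psi> \<eta> * \<psi> (flip \<eta> x))))"
proof -
  let ?R = "1/lo + 1/(1 - hi)"
  have weight_nonneg: "0 \<le> nu N \<rho> \<eta>" for \<eta>
    using \<rho> \<open>0 < lo\<close> \<open>hi < 1\<close> by (intro nu_nonneg) force
  have "0 \<le> M"
    using r Omega_nonempty by fastforce
  have "(\<Sum>\<eta>\<in>Omega N. nu N \<rho> \<eta> * (\<psi> (flip \<eta> x))\<^sup>2)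
      \<le> (\<Sum>\<eta>\<in>Omega N. ?R * (nu N \<rho> (flip \<eta> x) * (\<psi> (flip \<eta> x))\<^sup>2))"
    using nu_le_nu_flip[OF \<rho> \<open>0 < lo\<close> \<open>hi < 1\<close> x]
    by (intro sum_mono) (simp add: mult.assoc[symmetric] mult_right_mono)
  also have "\<dots> = ?R * (\<Sum>\<eta>\<in>Omega N. nu N \<rho> (flip \<eta> x) * (\<psi> (flip \<eta> x))\<^sup>2)"
    by (simp add: sum_distrib_left)
  also have "\<dots> = ?R"
    using norm sum_Omega_flip[OF x, of "\<lambda>\<eta>. nu N \<rho> \<eta> * (\<psi> \<eta>)\<^sup>2"] by (simp add: expect_def)
  finally have "- (M / 4) * ?R \<le> - (M / 4) * (\<Sum>\<eta>\<in>Omega N. nu N \<rho> \<eta> * (\<psi> (flip \<eta> x))\<^sup>2)"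
    using \<open>0 \<le> M\<close> by (simp add: mult_left_mono)
  also have "\<dots> = (\<Sum>\<eta>\<in>Omega N. nu N \<rho> \<eta> * (- (M / 4) * (\<psi> (flip \<eta> x))\<^sup>2))"
    by (simp add: sum_distrib_left algebra_simps)
  also have "\<dots> \<le> (\<Sum>\<eta>\<in>Omega N. nu N \<rho> \<eta> * (r \<eta> * ((\<psi> \<eta>)\<^sup>2 - \<psi> \<eta> * \<psi> (flip \<eta> x))))"
    using r weight_nonneg by (intro sum_mono mult_left_mono quadratic_lower_bound) auto
  finally show ?thesis .
qed

lemma inner_nu_gen_eq:
  "inner_nu N \<rho> \<psi> (\<lambda>\<eta>. - (s * gen L0 c N \<psi> \<eta>))
    = s * (\<Sum>x\<in>V_int N. \<Sum>\<eta>\<in>Omega N.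
        nu N \<rho> \<eta> * (rate L0 c N x \<eta> * ((\<psi> \<eta>)\<^sup>2 - \<psi> \<eta> * \<psi> (flip \<eta> x))))"
proof -
  have "nu N \<rho> \<eta> * (\<psi> \<eta> * - (s * gen L0 c N \<psi> \<eta>))
      = s * (\<Sum>x\<in>V_int N. nu N \<rho> \<eta> * (rate L0 c N x \<eta> * ((\<psi> \<eta>)\<^sup>2 - \<psi> \<eta> * \<psi> (flip \<eta> x))))"
    for \<eta>
    unfolding gen_def sum_distrib_left sum_negf[symmetric]
    by (rule sum.cong) (simp_all add: power2_eq_square algebra_simps)
  then show ?thesis
    unfolding inner_nu_def expect_def by (simp add: sum_distrib_left sum.swap[of _ "V_int N"])
qed

lemma dirichlet_form_lower_bound:
  assumes \<rho>: "\<forall>y\<in>V N. lo \<le> \<rho> y \<and> \<rho> y \<le> hi" and "0 < lo" and "hi < 1"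
    and rates: "\<forall>x\<in>V_int N. \<forall>\<eta>\<in>Omega N. 0 \<le> rate L0 c N x \<eta> \<and> rate L0 c N x \<eta> \<le> M"
    and "0 \<le> M" and density: "is_density N \<rho> (\<lambda>\<eta>. (\<psi> \<eta>)\<^sup>2)"
  shows "- (3/4 * M * (1/lo + 1/(1 - hi))) * (3/5) ^ N
      \<le> inner_nu N \<rho> \<psi> (\<lambda>\<eta>. - ((1/5) ^ N * gen L0 c N \<psi> \<eta>))"
proof -
  define R where "R = 1/lo + 1/(1 - hi)"
  have "0 \<le> R"
    using \<open>0 < lo\<close> \<open>hi < 1\<close> by (simp add: R_def)
  have "real (card (V_int N)) \<le> 3 ^ Suc N"
    using card_mono[OF finite_V, of "V_int N"] card_V[of N]
    unfolding V_int_def by (metis Diff_subset of_nat_le_iff of_nat_numeral of_nat_power order_trans)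
  then have "- (3 ^ Suc N * (M / 4 * R)) \<le> - real (card (V_int N)) * (M / 4 * R)"
    using \<open>0 \<le> M\<close> \<open>0 \<le> R\<close> by (simp add: mult_right_mono)
  also have "\<dots> = (\<Sum>x\<in>V_int N. - (M / 4) * R)"
    by simp
  also have "\<dots> \<le> (\<Sum>x\<in>V_int N. \<Sum>\<eta>\<in>Omega N.
      nu N \<rho> \<eta> * (rate L0 c N x \<eta> * ((\<psi> \<eta>)\<^sup>2 - \<psi> \<eta> * \<psi> (flip \<eta> x))))"
    using density rates \<open>0 < lo\<close> \<open>hi < 1\<close>
    unfolding R_def by (intro sum_mono site_form_lower_bound[OF \<rho>]) (auto simp: V_int_def is_density_def)
  finally have "(1/5) ^ N * (- (3 ^ Suc N * (M / 4 * R)))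
      \<le> inner_nu N \<rho> \<psi> (\<lambda>\<eta>. - ((1/5) ^ N * gen L0 c N \<psi> \<eta>))"
    unfolding inner_nu_gen_eq by (rule mult_left_mono) simp
  moreover have "(1/5::real) ^ N * 3 ^ Suc N = 3 * (3/5) ^ N"
    by (simp add: power_divide)
  then have "(1/5::real) ^ N * (- (3 ^ Suc N * (M / 4 * R))) = - (3/4 * M * R) * (3/5) ^ N"
    by (simp add: algebra_simps)
  ultimately show ?thesis
    unfolding R_def by metis
qed

lemma Min_Max_image_between:
  fixes f :: "'a \<Rightarrow> 'b::linorder"
  assumes "finite A" and "A \<noteq> {}" and "\<forall>x\<in>A. l < f x \<and> f x < u"
  shows "l < Min (f ` A)" and "Max (f ` A) < u"
  using assms Min_in[of "f ` A"] Max_in[of "f ` A"] by auto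

text \<open>The summand \<open>1\<close> keeps the constant positive without having to show \<open>cnorm L0 c > 0\<close>.\<close>

definition gap_constant :: "(pt \<Rightarrow> real) \<Rightarrow> real \<Rightarrow> real" where
  "gap_constant r m = (\<bar>m\<bar> + 1) * (1 / Min (r ` V0) + 1 / (1 - Max (r ` V0)))"

lemma gap_constant_restrict [simp]: "gap_constant (restrict r V0) = gap_constant r"
  by (simp add: gap_constant_def fun_eq_iff)

lemma gap_constant_pos:
  assumes "\<forall>x\<in>V0. 0 < r x \<and> r x < 1"
  shows "0 < gap_constant r m"
  using Min_Max_image_between[where A = V0 and f = r and l = 0 and u = 1] assms
  unfolding gap_constant_def by (simp add: V0_def add_pos_pos)

lemma dirichlet_form_ge_gap_constant:
  assumes \<rho>B: "\<forall>x\<in>V0. 0 < \<rho>B x \<and> \<rho>B x < 1"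
    and \<rho>: "\<forall>x\<in>K. Min (\<rho>B ` V0) \<le> \<rho> x \<and> \<rho> x \<le> Max (\<rho>B ` V0)"
    and c_pos: "\<forall>\<Lambda>\<in>shapes L0. \<forall>\<xi>\<in>PiE \<Lambda> (\<lambda>_. {0, 1}). c \<Lambda> \<xi> > 0"
    and "N \<ge> 1" and density: "is_density N \<rho> (\<lambda>\<eta>. (\<psi> \<eta>)\<^sup>2)"
  shows "- gap_constant \<rho>B (cnorm L0 c) * (3/5) ^ N
      \<le> inner_nu N \<rho> \<psi> (\<lambda>\<eta>. - ((1/5) ^ N * gen L0 c N \<psi> \<eta>))"
proof -
  define R where "R = 1 / Min (\<rho>B ` V0) + 1 / (1 - Max (\<rho>B ` V0))"
  have lo: "0 < Min (\<rho>B ` V0)" and hi: "Max (\<rho>B ` V0) < 1"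
    using Min_Max_image_between[where A = V0 and f = \<rho>B and l = 0 and u = 1] \<rho>B by (simp_all add: V0_def)
  have "\<forall>x\<in>V_int N. \<forall>\<eta>\<in>Omega N. 0 \<le> rate L0 c N x \<eta> \<and> rate L0 c N x \<eta> \<le> \<bar>cnorm L0 c\<bar>"
    using rate_bounds[OF \<open>N \<ge> 1\<close> _ _ c_pos] by (fastforce intro: less_imp_le)
  moreover have "\<forall>y\<in>V N. Min (\<rho>B ` V0) \<le> \<rho> y \<and> \<rho> y \<le> Max (\<rho>B ` V0)"
    using \<rho> V_subset_K[of N] by blast
  ultimately have "- (3/4 * \<bar>cnorm L0 c\<bar> * R) * (3/5) ^ N
      \<le> inner_nu N \<rho> \<psi> (\<lambda>\<eta>. - ((1/5) ^ N * gen L0 c N \<psi> \<eta>))"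
    unfolding R_def using lo hi density by (intro dirichlet_form_lower_bound) auto
  moreover have "3/4 * \<bar>cnorm L0 c\<bar> * R \<le> gap_constant \<rho>B (cnorm L0 c)"
    unfolding gap_constant_def R_def[symmetric] using lo hi
    by (intro mult_right_mono) (auto simp: R_def)
  then have "- gap_constant \<rho>B (cnorm L0 c) * (3/5) ^ N \<le> - (3/4 * \<bar>cnorm L0 c\<bar> * R) * (3/5) ^ N"
    by (intro mult_right_mono) simp_all
  ultimately show ?thesis
    by (rule order_trans[rotated])
qed

theorem proposition3p1:
  "\<exists>Cf :: (pt \<Rightarrow> real) \<Rightarrow> real \<Rightarrow> real.
    \<forall>(lp :: pt \<Rightarrow> real) (lm :: pt \<Rightarrow> real) (\<rho>B :: pt \<Rightarrow> real) (\<rho>lo :: real) (\<rho>hi :: real)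
      (rho :: pt \<Rightarrow> real) (L0 :: nat) (c :: pt set \<Rightarrow> (pt \<Rightarrow> nat) \<Rightarrow> real).
      (\<forall>x\<in>V0. lp x > 0 \<and> lm x > 0)
      \<and> (\<forall>x\<in>V0. \<rho>B x = lp x / (lp x + lm x))
      \<and> \<rho>lo = Min (\<rho>B ` V0) \<and> \<rho>hi = Max (\<rho>B ` V0)
      \<and> in_F rho \<and> (\<forall>x\<in>V0. rho x = \<rho>B x)
      \<and> (\<forall>x\<in>K. \<rho>lo \<le> rho x \<and> rho x \<le> \<rho>hi)
      \<and> (\<exists>x\<in>K. rho x = \<rho>lo) \<and> (\<exists>x\<in>K. rho x = \<rho>hi)
      \<and> L0 \<ge> 1
      \<and> (\<forall>\<Lambda>\<in>shapes L0. \<forall>\<xi>\<in>PiE \<Lambda> (\<lambda>_. {0, 1}). c \<Lambda> \<xi> > 0)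
      \<longrightarrow> Cf (restrict \<rho>B V0) (cnorm L0 c) > 0
        \<and> (\<forall>N \<ge> 1. \<forall>\<psi> :: (pt \<Rightarrow> nat) \<Rightarrow> real.
             is_density N rho (\<lambda>\<eta>. (\<psi> \<eta>)\<^sup>2) \<longrightarrow>
             inner_nu N rho \<psi> (\<lambda>\<eta>. - ((1/5) ^ N * gen L0 c N \<psi> \<eta>))
               \<ge> - Cf (restrict \<rho>B V0) (cnorm L0 c) * (3/5) ^ N)"
proof (intro exI[of _ gap_constant] allI impI, elim conjE)
  fix lp lm \<rho>B rho :: "pt \<Rightarrow> real" and \<rho>lo \<rho>hi :: real and L0 :: nat
    and c :: "pt set \<Rightarrow> (pt \<Rightarrow> nat) \<Rightarrow> real"
  assume lpm: "\<forall>x\<in>V0. lp x > 0 \<and> lm x > 0" and \<rho>B: "\<forall>x\<in>V0. \<rho>B x = lp x / (lp x + lm x)"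
    and "\<rho>lo = Min (\<rho>B ` V0)" and "\<rho>hi = Max (\<rho>B ` V0)"
    and "\<forall>x\<in>K. \<rho>lo \<le> rho x \<and> rho x \<le> \<rho>hi"
    and "\<forall>\<Lambda>\<in>shapes L0. \<forall>\<xi>\<in>PiE \<Lambda> (\<lambda>_. {0, 1}). c \<Lambda> \<xi> > 0"
  moreover have "\<forall>x\<in>V0. 0 < \<rho>B x \<and> \<rho>B x < 1"
    using lpm \<rho>B by (auto simp: divide_less_eq)
  ultimately show "gap_constant (restrict \<rho>B V0) (cnorm L0 c) > 0
      \<and> (\<forall>N \<ge> 1. \<forall>\<psi>. is_density N rho (\<lambda>\<eta>. (\<psi> \<eta>)\<^sup>2) \<longrightarrow>
          inner_nu N rho \<psi> (\<lambda>\<eta>. - ((1/5) ^ N * gen L0 c N \<psi> \<eta>))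
          \<ge> - gap_constant (restrict \<rho>B V0) (cnorm L0 c) * (3/5) ^ N)"
    using gap_constant_pos dirichlet_form_ge_gap_constant by simp
qed

end
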